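(* Let $0<\tau<T$, $\lambda>0$, $\kappa_3\in(0,1)$ and $t_3\in(\tau,T)$. For every $\gamma_3\ge\kappa_3/(t_3-\tau)$, any solution $(x(t),y(t))$ on $[\tau,T]$ of \[ x'=y,\qquad y'=-\lambda a^+(t)g(x) \] with $x(t_3)\le\kappa_3$ and $y(t_3)\ge\gamma_3$ satisfies $x(\tau)\le0$ and $y(\tau)\ge\gamma_3$.
   Context: $a\in L^1(\tau,T)$ with positive part $a^+$. $g\colon\mathbb{R}\to[0,+\infty)$ is the extension by zero outside $[0,1]$ of a locally Lipschitz continuous function $g\colon[0,1]\to[0,+\infty)$ with $g(0)=g(1)=0$, $g(s)>0$ for $0<s<1$ and $\lim_{s\to0^+}g(s)/s=0$. Solutions are in the Carathéodory sense. *)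

theory Defs
  imports "HOL-Analysis.Analysis"
begin

definition pos_part_fun :: "(real \<Rightarrow> real) \<Rightarrow> real \<Rightarrow> real" where
  "pos_part_fun a t = max (a t) 0"

definition admissible_g :: "(real \<Rightarrow> real) \<Rightarrow> bool" where
  "admissible_g g \<longleftrightarrow>
     (\<forall>s. s < 0 \<or> s > 1 \<longrightarrow> g s = 0) \<and>
     (\<forall>s. g s \<ge> 0) \<and>
     (\<forall>s\<in>{0..1}. \<exists>e>0. \<exists>L. L-lipschitz_on (cball s e \<inter> {0..1}) g) \<and>
     g 0 = 0 \<and> g 1 = 0 \<and>
     (\<forall>s. 0 < s \<and> s < 1 \<longrightarrow> g s > 0) \<and>
     ((\<lambda>s. g s / s) \<longlongrightarrow> 0) (at_right 0)"

text \<open>Caratheodory solution on [tau,T] of x' = y, y' = - lambda a^+(t) g(x),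
  expressed in the equivalent integral form (absolutely continuous functions whose
  a.e. derivatives are the right-hand sides).\<close>
definition carath_solution ::
  "real \<Rightarrow> real \<Rightarrow> real \<Rightarrow> (real \<Rightarrow> real) \<Rightarrow> (real \<Rightarrow> real) \<Rightarrow> (real \<Rightarrow> real) \<Rightarrow> (real \<Rightarrow> real) \<Rightarrow> bool" where
  "carath_solution \<tau> T lam a g x y \<longleftrightarrow>
     continuous_on {\<tau>..T} x \<and> continuous_on {\<tau>..T} y \<and>
     (\<lambda>s. pos_part_fun a s * g (x s)) absolutely_integrable_on {\<tau>..T} \<and>
     (\<forall>t\<in>{\<tau>..T}. x t = x \<tau> + integral {\<tau>..t} y) \<and>
     (\<forall>t\<in>{\<tau>..T}. y t = y \<tau> - lam * integral {\<tau>..t} (\<lambda>s. pos_part_fun a s * g (x s)))"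

end

theory Submission
  imports Defs
begin

text \<open>Since \<open>a\<^sup>+ g \<ge> 0\<close>, the velocity \<open>y\<close> is nonincreasing; going backwards from \<open>t\<^sub>3\<close> it
  therefore stays \<open>\<ge> \<gamma>\<^sub>3\<close> on \<open>[\<tau>, t\<^sub>3]\<close>. Hence \<open>x\<close> grows by at least
  \<open>\<gamma>\<^sub>3 (t\<^sub>3 - \<tau>) \<ge> \<kappa>\<^sub>3 \<ge> x t\<^sub>3\<close> on that interval, which forces \<open>x \<tau> \<le> 0\<close>.\<close>

lemma integral_interval_mono_nonneg:
  fixes f :: "real \<Rightarrow> real"
  assumes "f integrable_on {a..b}" "\<And>t. t \<in> {a..b} \<Longrightarrow> 0 \<le> f t"
    and "s \<le> t" "t \<le> b"
  shows "integral {a..s} f \<le> integral {a..t} f"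
proof (rule integral_subset_le)
  show "f integrable_on {a..s}" "f integrable_on {a..t}"
    using assms(1,3,4) by (auto intro: integrable_on_subinterval)
qed (use assms in auto)

lemma integral_ge_const_interval:
  fixes y :: "real \<Rightarrow> real"
  assumes "continuous_on {a..b} y" "a \<le> b" "\<And>t. t \<in> {a..b} \<Longrightarrow> c \<le> y t"
  shows "c * (b - a) \<le> integral {a..b} y"
proof -
  have "integral {a..b} (\<lambda>_. c) \<le> integral {a..b} y"
    using assms by (intro integral_le integrable_continuous_interval) auto
  with assms(2) show ?thesis by (simp add: mult.commute)
qed

lemma carath_solution_velocity_antimono:
  assumes sol: "carath_solution \<tau> T lam a g x y"
    and "0 \<le> lam" "\<And>s. 0 \<le> g s"
    and "\<tau> \<le> s" "s \<le> t" "t \<le> T"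
  shows "y t \<le> y s"
proof -
  define f where "f s = pos_part_fun a s * g (x s)" for s
  have "f absolutely_integrable_on {\<tau>..T}"
    and y_eq: "\<And>t. t \<in> {\<tau>..T} \<Longrightarrow> y t = y \<tau> - lam * integral {\<tau>..t} f"
    using sol unfolding carath_solution_def f_def by blast+
  then have "f integrable_on {\<tau>..T}"
    using set_lebesgue_integral_eq_integral(1) by blast
  moreover have "0 \<le> f r" for r
    using assms(3) by (simp add: f_def pos_part_fun_def)
  ultimately have "integral {\<tau>..s} f \<le> integral {\<tau>..t} f"
    using assms(5,6) by (intro integral_interval_mono_nonneg) auto
  then have "lam * integral {\<tau>..s} f \<le> lam * integral {\<tau>..t} f"
    using assms(2) by (rule mult_left_mono)
  with y_eq[of s] y_eq[of t] assms(4-6) show ?thesis by simp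
qed

theorem lemma2p4:
  fixes \<tau> T lam \<kappa>\<^sub>3 t\<^sub>3 \<gamma>\<^sub>3 :: real and a g x y :: "real \<Rightarrow> real"
  assumes "0 < \<tau>" "\<tau> < T" "lam > 0"
    and "0 < \<kappa>\<^sub>3" "\<kappa>\<^sub>3 < 1"
    and "\<tau> < t\<^sub>3" "t\<^sub>3 < T"
    and "a absolutely_integrable_on {\<tau>..T}"
    and "admissible_g g"
    and "\<gamma>\<^sub>3 \<ge> \<kappa>\<^sub>3 / (t\<^sub>3 - \<tau>)"
    and "carath_solution \<tau> T lam a g x y"
    and "x t\<^sub>3 \<le> \<kappa>\<^sub>3" "y t\<^sub>3 \<ge> \<gamma>\<^sub>3"
  shows "x \<tau> \<le> 0 \<and> y \<tau> \<ge> \<gamma>\<^sub>3"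
proof -
  have g_nonneg: "0 \<le> g s" for s
    using assms(9) unfolding admissible_g_def by blast
  have y_ge: "\<gamma>\<^sub>3 \<le> y t" if "t \<in> {\<tau>..t\<^sub>3}" for t
  proof -
    have "y t\<^sub>3 \<le> y t"
      using that assms(3,7) by (intro carath_solution_velocity_antimono[OF assms(11) _ g_nonneg]) auto
    with assms(13) show ?thesis by linarith
  qed
  have y_cont: "continuous_on {\<tau>..T} y"
    and x_eq: "\<forall>t\<in>{\<tau>..T}. x t = x \<tau> + integral {\<tau>..t} y"
    using assms(11) unfolding carath_solution_def by blast+
  from y_cont have "continuous_on {\<tau>..t\<^sub>3} y"
    by (rule continuous_on_subset) (use assms(7) in auto)
  then have "\<gamma>\<^sub>3 * (t\<^sub>3 - \<tau>) \<le> integral {\<tau>..t\<^sub>3} y"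
    using assms(6) y_ge by (intro integral_ge_const_interval) auto
  moreover have "\<kappa>\<^sub>3 \<le> \<gamma>\<^sub>3 * (t\<^sub>3 - \<tau>)"
    using assms(6,10) by (simp add: pos_divide_le_eq)
  moreover have "x t\<^sub>3 = x \<tau> + integral {\<tau>..t\<^sub>3} y"
    by (rule bspec[OF x_eq]) (use assms(6,7) in auto)
  ultimately have "x \<tau> \<le> 0"
    using assms(12) by linarith
  with y_ge[of \<tau>] assms(6) show ?thesis by simp
qed

end
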